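(* Let $\mathcal{F}$ be a regular facets-pairing structure on $\mathcal{C}^n$. Then for every proper face $f$ of $\mathcal{C}^n$ of codimension $s$, the face family $\widehat f$ contains at most $2^s$ faces. Consequently $\widehat f$ has the maximal possible number $2^s$ of elements exactly when it is a perfect face family.
   Context: Let $[\pm n]=\{\pm1,\dots,\pm n\}$ and $\mathcal{C}^n=\{x\in\mathbb{R}^n: -\tfrac14\le x_i\le\tfrac14\}$. For $1\le i\le n$, $\mathbf{F}(i)$ and $\mathbf{F}(-i)$ denote the facets of $\mathcal{C}^n$ in $\{x_i=\tfrac14\}$ and $\{x_i=-\tfrac14\}$; for $j_1,\dots,j_s\in[\pm n]$ with distinct absolute values, $\mathbf{F}(j_1,\dots,j_s)=\bigcap_i\mathbf{F}(j_i)$. A signed permutation is a bijection $\sigma$ of $[\pm n]$ with $\sigma(-k)=-\sigma(k)$. A facets-pairing structure on $\mathcal{C}^n$ is a pair $(\omega,\{\tau_j\})$ where $\omega$ is a bijection of $[\pm n]$ with $\omega\circ\omega=\mathrm{id}$ and $\tau_j:\mathbf{F}(j)\to\mathbf{F}(\omega(j))$ are face-preserving homeomorphisms with $\tau_{\omega(j)}=\tau_j^{-1}$, such that for all $|j|\ne|k|$, writing $\tau_j(\mathbf{F}(j,k))=\mathbf{F}(\omega(j),k')$ and $\tau_k(\mathbf{F}(j,k))=\mathbf{F}(j',\omega(k))$, one has $\tau_{k'}\tau_j(p)=\tau_{j'}\tau_k(p)$ for all $p\in\mathbf{F}(j,k)$. It is regular if each $\tau_j$ is a Euclidean isometry and $\omega$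 is a signed permutation. A composition $\tau_{k_m}\circ\dots\circ\tau_{k_1}(f)$ applied to a proper face $f$ is valid if $f\subset\mathbf{F}(k_1)$ and $\tau_{k_i}\circ\dots\circ\tau_{k_1}(f)\subset\mathbf{F}(k_{i+1})$ for $1\le i<m$ ($m=0$ allowed, giving $f$). The face family $\widehat f$ is the set of all faces of this valid form. A face family $\widehat f$ with $f$ of codimension $s$ is perfect if it has exactly $2^s$ elements. *)

theory Defs
  imports "HOL-Analysis.Analysis"
begin

text \<open>Signed indices [+-n] are modelled as pairs (i, b) with i :: 'n an index
  of the finite type 'n (n = CARD('n)) and b the sign: (i, True) stands for +i,
  (i, False) for -i.\<close>

type_synonym 'n sidx = "'n \<times> bool"

definition sneg :: "'n sidx \<Rightarrow> 'n sidx" where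
  "sneg j = (fst j, \<not> snd j)"

definition cube :: "(real ^ 'n) set" where
  "cube = {x. \<forall>i. - (1/4) \<le> x $ i \<and> x $ i \<le> 1/4}"

definition sval :: "bool \<Rightarrow> real" where
  "sval b = (if b then 1/4 else - (1/4))"

definition facet :: "'n sidx \<Rightarrow> (real ^ 'n::finite) set" where
  "facet j = {x \<in> cube. x $ fst j = sval (snd j)}"

definition distinct_abs :: "'n sidx set \<Rightarrow> bool" where
  "distinct_abs J \<longleftrightarrow> inj_on fst J"

definition faceF :: "'n sidx set \<Rightarrow> (real ^ 'n::finite) set" where
  "faceF J = cube \<inter> (\<Inter>j\<in>J. facet j)"

definition proper_face :: "(real ^ 'n::finite) set \<Rightarrow> bool" where
  "proper_face g \<longleftrightarrow> (\<exists>J. J \<noteq> {} \<and> distinct_abs J \<and> g = faceF J)"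

definition face_preserving ::
  "(real ^ 'n::finite) set \<Rightarrow> (real ^ 'n \<Rightarrow> real ^ 'n) \<Rightarrow> bool" where
  "face_preserving S h \<longleftrightarrow>
     (\<forall>g. proper_face g \<and> g \<subseteq> S \<longrightarrow> proper_face (h ` g))"

definition facets_pairing ::
  "('n::finite sidx \<Rightarrow> 'n sidx) \<Rightarrow> ('n sidx \<Rightarrow> real ^ 'n \<Rightarrow> real ^ 'n) \<Rightarrow> bool" where
  "facets_pairing \<omega> \<tau> \<longleftrightarrow>
     bij \<omega> \<and> (\<forall>j. \<omega> (\<omega> j) = j) \<and>
     (\<forall>j. homeomorphism (facet j) (facet (\<omega> j)) (\<tau> j) (\<tau> (\<omega> j))) \<and>
     (\<forall>j. face_preserving (facet j) (\<tau> j)) \<and>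
     (\<forall>j k j' k'. fst j \<noteq> fst k \<longrightarrow>
        fst k' \<noteq> fst (\<omega> j) \<longrightarrow> fst j' \<noteq> fst (\<omega> k) \<longrightarrow>
        \<tau> j ` faceF {j, k} = faceF {\<omega> j, k'} \<longrightarrow>
        \<tau> k ` faceF {j, k} = faceF {j', \<omega> k} \<longrightarrow>
        (\<forall>p \<in> faceF {j, k}. \<tau> k' (\<tau> j p) = \<tau> j' (\<tau> k p)))"

definition signed_perm :: "('n sidx \<Rightarrow> 'n sidx) \<Rightarrow> bool" where
  "signed_perm \<omega> \<longleftrightarrow> bij \<omega> \<and> (\<forall>k. \<omega> (sneg k) = sneg (\<omega> k))"

definition regular_facets_pairing ::
  "('n::finite sidx \<Rightarrow> 'n sidx) \<Rightarrow> ('n sidx \<Rightarrow> real ^ 'n \<Rightarrow> real ^ 'n) \<Rightarrow> bool" where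
  "regular_facets_pairing \<omega> \<tau> \<longleftrightarrow>
     facets_pairing \<omega> \<tau> \<and> signed_perm \<omega> \<and>
     (\<forall>j. \<forall>p \<in> facet j. \<forall>q \<in> facet j. dist (\<tau> j p) (\<tau> j q) = dist p q)"

text \<open>Valid compositions: the list [k_1, ..., k_m] encodes tau_{k_m} o ... o tau_{k_1}.\<close>
fun valid_comp ::
  "('n::finite sidx \<Rightarrow> real ^ 'n \<Rightarrow> real ^ 'n) \<Rightarrow> 'n sidx list \<Rightarrow> (real ^ 'n) set \<Rightarrow> bool" where
  "valid_comp \<tau> [] f = True"
| "valid_comp \<tau> (k # ks) f = (f \<subseteq> facet k \<and> valid_comp \<tau> ks (\<tau> k ` f))"

fun apply_comp ::
  "('n sidx \<Rightarrow> real ^ 'n \<Rightarrow> real ^ 'n) \<Rightarrow> 'n sidx list \<Rightarrow> (real ^ 'n) set \<Rightarrow> (real ^ 'n) set" where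
  "apply_comp \<tau> [] f = f"
| "apply_comp \<tau> (k # ks) f = apply_comp \<tau> ks (\<tau> k ` f)"

definition face_family ::
  "('n::finite sidx \<Rightarrow> real ^ 'n \<Rightarrow> real ^ 'n) \<Rightarrow> (real ^ 'n) set \<Rightarrow> (real ^ 'n) set set" where
  "face_family \<tau> f = {apply_comp \<tau> ks f | ks. valid_comp \<tau> ks f}"

definition perfect_family ::
  "('n::finite sidx \<Rightarrow> real ^ 'n \<Rightarrow> real ^ 'n) \<Rightarrow> 'n sidx set \<Rightarrow> bool" where
  "perfect_family \<tau> J \<longleftrightarrow> card (face_family \<tau> (faceF J)) = 2 ^ card J"

end

theory Submission
  imports Defs
begin

text \<open>
  Geometry of the cube: F(K) is a box whose facets are exactly those indexed by K, and whose
  diameter sqrt(n - card K)/2 determines its codimension.  Since the pairing maps are isometries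
  and face-preserving, every member of the face family is again a face F(K) of codimension s.

  Combinatorics: give each member h its level, the length of a shortest valid composition
  producing h from f.  A descent of h is a facet through h along which the pairing map lowers
  the level.  The cocycle condition transports the descents of a member one level lower to
  descents of h, so a member of level d has at least d descents (and hence at most s - d
  ascents).  Double counting the moves between consecutive levels gives
  (d+1) N(d+1) \<le> (s-d) N(d) for the number N(d) of members of level d, so N(d) \<le> s choose d
  and the family has at most \<Sum>d. (s choose d) = 2^s members.
\<close>

definition face_point :: "'n sidx set \<Rightarrow> ('n \<Rightarrow> real) \<Rightarrow> real ^ 'n::finite" where
  "face_point K c = (\<chi> i. if (i, True) \<in> K then 1/4 else if (i, False) \<in> K then - (1/4) else c i)"

lemma mem_faceF: "x \<in> faceF K \<longleftrightarrow> x \<in> cube \<and> (\<forall>j\<in>K. x $ fst j = sval (snd j))"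
  by (auto simp: faceF_def facet_def)

lemma distinct_abs_opposite: "distinct_abs K \<Longrightarrow> (i, b) \<in> K \<Longrightarrow> (i, \<not> b) \<notin> K"
  unfolding distinct_abs_def by (metis fst_conv inj_onD snd_conv)

lemma face_point_faceF:
  assumes K: "distinct_abs K" and c: "\<And>i. \<bar>c i\<bar> \<le> 1/4"
  shows "face_point K c \<in> faceF K"
proof -
  have "- (1/4) \<le> c i \<and> c i \<le> 1/4" for i
    using c[of i] by linarith
  then have "face_point K c \<in> cube"
    by (auto simp: face_point_def cube_def)
  moreover have "face_point K c $ i = sval b" if "(i, b) \<in> K" for i b
    using that distinct_abs_opposite[OF K that] by (cases b) (auto simp: face_point_def sval_def)
  ultimately show ?thesis by (auto simp: mem_faceF)
qed

lemma faceF_cbox: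
  assumes K: "distinct_abs K"
  shows "faceF K = cbox (face_point K (\<lambda>_. - (1/4))) (face_point K (\<lambda>_. 1/4))"
proof -
  have "x \<in> faceF K \<longleftrightarrow> x \<in> cbox (face_point K (\<lambda>_. - (1/4))) (face_point K (\<lambda>_. 1/4))" for x
  proof -
    have "x \<in> faceF K \<longleftrightarrow> (\<forall>i. - (1/4) \<le> x $ i \<and> x $ i \<le> 1/4 \<and> (\<forall>b. (i, b) \<in> K \<longrightarrow> x $ i = sval b))"
      by (auto simp: mem_faceF cube_def)
    also have "\<dots> \<longleftrightarrow> (\<forall>i. face_point K (\<lambda>_. - (1/4)) $ i \<le> x $ i \<and> x $ i \<le> face_point K (\<lambda>_. 1/4) $ i)"
      using distinct_abs_opposite[OF K] by (auto simp: face_point_def sval_def) (smt (verit))+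
    finally show ?thesis by (simp add: mem_box_cart)
  qed
  then show ?thesis by blast
qed

lemma diameter_isometric_image:
  assumes "\<forall>x\<in>S. \<forall>y\<in>S. dist (h x) (h y) = dist x y"
  shows "diameter (h ` S) = diameter S"
proof (cases "S = {}")
  case False
  have "h ` S \<times> h ` S = (\<lambda>(x, y). (h x, h y)) ` (S \<times> S)" by auto
  then have "(SUP (u, v)\<in>h ` S \<times> h ` S. dist u v) = (SUP (x, y)\<in>S \<times> S. dist (h x) (h y))"
    by (simp add: image_image case_prod_beta)
  also have "\<dots> = (SUP (x, y)\<in>S \<times> S. dist x y)"
    using assms by (intro SUP_cong) auto
  finally show ?thesis using False by (simp add: diameter_def)
qed (simp add: diameter_def)

lemma card_faceF_indices:
  fixes K :: "'n::finite sidx set"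
  assumes "distinct_abs K"
  shows "card (fst ` K) = card K" "card (- fst ` K) = CARD('n) - card K"
proof -
  show c: "card (fst ` K) = card K"
    using assms finite by (simp add: distinct_abs_def card_image)
  show "card (- fst ` K) = CARD('n) - card K"
    by (simp add: Compl_eq_Diff_UNIV card_Diff_subset c[symmetric])
qed

lemma diameter_faceF:
  fixes K :: "'n::finite sidx set"
  assumes K: "distinct_abs K"
  shows "diameter (faceF K) = sqrt (real (CARD('n) - card K)) / 2"
proof -
  let ?lo = "face_point K (\<lambda>_. - (1/4))" and ?hi = "face_point K (\<lambda>_. 1/4)"
  have fixed: "i \<in> fst ` K \<longleftrightarrow> (i, True) \<in> K \<or> (i, False) \<in> K" for i
  proof -
    have "i \<in> fst ` K \<longleftrightarrow> (\<exists>b. (i, b) \<in> K)" by force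
    then show ?thesis by (simp add: ex_bool_eq)
  qed
  have "faceF K \<noteq> {}"
    using face_point_faceF[OF K, of "\<lambda>_. 0"] by auto
  then have "\<forall>i\<in>Basis. ?lo \<bullet> i \<le> ?hi \<bullet> i"
    by (simp add: faceF_cbox[OF K] box_ne_empty)
  then have "diameter (faceF K) = dist ?lo ?hi"
    by (simp add: faceF_cbox[OF K] diameter_cbox)
  also have "\<dots> = sqrt (\<Sum>i\<in>UNIV. (if i \<in> fst ` K then 0 else 1/4))"
    unfolding dist_vec_def L2_set_def
    by (intro arg_cong[where f = sqrt] sum.cong)
       (auto simp: face_point_def dist_real_def power2_eq_square fixed)
  also have "\<dots> = sqrt (real (card (- fst ` K)) / 4)"
    by (simp add: sum.If_cases Compl_eq_Diff_UNIV)
  also have "\<dots> = sqrt (real (CARD('n) - card K)) / 2"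
    by (simp add: card_faceF_indices[OF K] real_sqrt_divide)
  finally show ?thesis .
qed

lemma faceF_codim_eq:
  fixes K K' :: "'n::finite sidx set"
  assumes "distinct_abs K" "distinct_abs K'" "diameter (faceF K) = diameter (faceF K')"
  shows "card K = card K'"
proof -
  have "card K \<le> CARD('n)" "card K' \<le> CARD('n)"
    using card_faceF_indices(1) assms(1,2) card_mono[OF finite subset_UNIV] by metis+
  then show ?thesis
    using assms by (simp add: diameter_faceF)
qed

definition containing_facets :: "(real ^ 'n::finite) set \<Rightarrow> 'n sidx set" where
  "containing_facets g = {k. g \<subseteq> facet k}"

lemma containing_facets_faceF:
  assumes K: "distinct_abs K"
  shows "containing_facets (faceF K) = K"
proof
  show "K \<subseteq> containing_facets (faceF K)"
    by (auto simp: containing_facets_def faceF_def)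
next
  show "containing_facets (faceF K) \<subseteq> K"
  proof
    fix k assume "k \<in> containing_facets (faceF K)"
    then have sub: "faceF K \<subseteq> facet k" by (simp add: containing_facets_def)
    obtain i b where k: "k = (i, b)" by (cases k)
    let ?x = "face_point K (\<lambda>_. - sval b)"
    have "?x \<in> faceF K"
      by (rule face_point_faceF[OF K]) (simp add: sval_def)
    then have "?x $ i = sval b"
      using sub k by (auto simp: facet_def)
    then show "k \<in> K"
      using k by (cases b) (auto simp: face_point_def sval_def split: if_splits)
  qed
qed

lemma faceF_inj:
  assumes "distinct_abs K" "distinct_abs K'" "faceF K = faceF K'"
  shows "K = K'"
  using containing_facets_faceF assms by metis

lemma binomial_bound_from_recurrence:
  fixes N :: "nat \<Rightarrow> nat"
  assumes base: "N 0 \<le> 1"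
    and step: "\<And>d. Suc d * N (Suc d) \<le> (s - d) * N d"
  shows "N d \<le> s choose d"
proof (induction d)
  case 0
  then show ?case using base by simp
next
  case (Suc d)
  have "Suc d * N (Suc d) \<le> (s - d) * N d" by (rule step)
  also have "\<dots> \<le> (s - d) * (s choose d)" using Suc.IH by simp
  also have "\<dots> = Suc d * (s choose Suc d)"
  proof (cases s)
    case (Suc m)
    have "Suc d * (Suc m choose Suc d) = Suc m * (m choose d)"
      by (rule Suc_times_binomial)
    moreover have "(Suc m - d) * (Suc m choose d) = Suc m * (m choose d)"
      by (metis binomial_absorb_comp diff_Suc_1)
    ultimately show ?thesis unfolding Suc by linarith
  qed simp
  finally show ?case
    using Suc_mult_le_cancel1 by blast
qed

lemma card_bound_by_rank_recurrence:
  fixes F :: "'a set" and rank :: "'a \<Rightarrow> nat"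
  defines "N d \<equiv> card {x \<in> F. rank x = d}"
  assumes F: "finite F"
    and base: "N 0 \<le> 1"
    and step: "\<And>d. Suc d * N (Suc d) \<le> (s - d) * N d"
  shows "card F \<le> 2 ^ s"
proof -
  have level_bound: "N d \<le> s choose d" for d
    using binomial_bound_from_recurrence[of N, OF base step] .
  have "F \<subseteq> (\<Union>d\<le>s. {x \<in> F. rank x = d})"
  proof
    fix x assume x: "x \<in> F"
    have "0 < N (rank x)"
      using x F by (auto simp: N_def card_gt_0_iff)
    then have "rank x \<le> s"
      using level_bound[of "rank x"] by (metis binomial_eq_0 not_le)
    then show "x \<in> (\<Union>d\<le>s. {x \<in> F. rank x = d})" using x by auto
  qed
  then have "card F \<le> card (\<Union>d\<le>s. {x \<in> F. rank x = d})"
    by (rule card_mono[rotated]) (simp add: F)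
  also have "\<dots> \<le> (\<Sum>d\<le>s. N d)"
    unfolding N_def by (rule card_UN_le) simp
  also have "\<dots> \<le> (\<Sum>d\<le>s. s choose d)"
    by (rule sum_mono) (rule level_bound)
  also have "\<dots> = 2 ^ s"
    by (rule choose_row_sum)
  finally show ?thesis .
qed


lemma valid_comp_snoc:
  "valid_comp \<tau> (ks @ [k]) f \<longleftrightarrow> valid_comp \<tau> ks f \<and> apply_comp \<tau> ks f \<subseteq> facet k"
  by (induction ks arbitrary: f) auto

lemma apply_comp_snoc:
  "apply_comp \<tau> (ks @ [k]) f = \<tau> k ` apply_comp \<tau> ks f"
  by (induction ks arbitrary: f) auto

definition comp_level ::
  "('n::finite sidx \<Rightarrow> real ^ 'n \<Rightarrow> real ^ 'n) \<Rightarrow> (real ^ 'n) set \<Rightarrow> (real ^ 'n) set \<Rightarrow> nat" where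
  "comp_level \<tau> f h =
     (LEAST m. \<exists>ks. length ks = m \<and> valid_comp \<tau> ks f \<and> apply_comp \<tau> ks f = h)"

locale regular_pairing =
  fixes \<omega> :: "'n::finite sidx \<Rightarrow> 'n sidx"
    and \<tau> :: "'n sidx \<Rightarrow> real ^ 'n \<Rightarrow> real ^ 'n"
  assumes regular: "regular_facets_pairing \<omega> \<tau>"
begin

lemma pairing_involution: "\<omega> (\<omega> j) = j"
  using regular unfolding regular_facets_pairing_def facets_pairing_def by blast

lemma pairing_homeomorphism: "homeomorphism (facet j) (facet (\<omega> j)) (\<tau> j) (\<tau> (\<omega> j))"
  using regular unfolding regular_facets_pairing_def facets_pairing_def by blast

lemma pairing_face_preserving: "face_preserving (facet j) (\<tau> j)"
  using regular unfolding regular_facets_pairing_def facets_pairing_def by blast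

lemma pairing_isometric: "\<forall>p\<in>facet j. \<forall>q\<in>facet j. dist (\<tau> j p) (\<tau> j q) = dist p q"
  using regular unfolding regular_facets_pairing_def by blast

lemma pairing_cocycle:
  assumes "fst j \<noteq> fst k" "fst k' \<noteq> fst (\<omega> j)" "fst j' \<noteq> fst (\<omega> k)"
    and "\<tau> j ` faceF {j, k} = faceF {\<omega> j, k'}" "\<tau> k ` faceF {j, k} = faceF {j', \<omega> k}"
    and "p \<in> faceF {j, k}"
  shows "\<tau> k' (\<tau> j p) = \<tau> j' (\<tau> k p)"
  using regular assms unfolding regular_facets_pairing_def facets_pairing_def by blast

lemma tau_inverse:
  assumes "h \<subseteq> facet k"
  shows "\<tau> (\<omega> k) ` \<tau> k ` h = h"
proof -
  have "\<tau> (\<omega> k) (\<tau> k x) = x" if "x \<in> h" for x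
    using that assms homeomorphism_apply1[OF pairing_homeomorphism[of k]] by blast
  then show ?thesis by (force simp: image_image)
qed

lemma tau_maps_into: "h \<subseteq> facet k \<Longrightarrow> \<tau> k ` h \<subseteq> facet (\<omega> k)"
  using homeomorphism_image1[OF pairing_homeomorphism, of k] by blast

lemma tau_image_faceF:
  assumes K: "distinct_abs K" "K \<noteq> {}" and sub: "faceF K \<subseteq> facet p"
  obtains K' where "distinct_abs K'" "K' \<noteq> {}" "\<tau> p ` faceF K = faceF K'"
    "card K' = card K" "\<omega> p \<in> K'"
proof -
  have "proper_face (faceF K)" using K by (auto simp: proper_face_def)
  then have "proper_face (\<tau> p ` faceF K)"
    using pairing_face_preserving sub by (auto simp: face_preserving_def)
  then obtain K' where K': "K' \<noteq> {}" "distinct_abs K'" "\<tau> p ` faceF K = faceF K'"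
    by (auto simp: proper_face_def)
  have "diameter (faceF K') = diameter (faceF K)"
    using diameter_isometric_image[of "faceF K" "\<tau> p"] pairing_isometric[of p] sub K'(3) by auto
  then have "card K' = card K"
    using faceF_codim_eq K(1) K'(2) by blast
  moreover have "\<omega> p \<in> K'"
    using tau_maps_into[OF sub] K'(3) containing_facets_faceF[OF K'(2)]
    by (auto simp: containing_facets_def)
  ultimately show ?thesis using K' that by blast
qed

lemma tau_image_ridge:
  assumes "fst r \<noteq> fst p"
  obtains r' where "fst r' \<noteq> fst (\<omega> p)" "\<tau> p ` faceF {r, p} = faceF {r', \<omega> p}"
proof -
  have "r \<noteq> p" using assms by auto
  then have rp: "distinct_abs {r, p}" "card {r, p} = 2"
    using assms by (auto simp: distinct_abs_def)
  have "faceF {r, p} \<subseteq> facet p" by (auto simp: faceF_def)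
  then obtain K' where K': "distinct_abs K'" "K' \<noteq> {}" "\<tau> p ` faceF {r, p} = faceF K'"
    "card K' = card {r, p}" "\<omega> p \<in> K'"
    using tau_image_faceF[OF rp(1)] by blast
  then obtain r' where r': "K' = {r', \<omega> p}" "r' \<noteq> \<omega> p"
    using rp(2) by (metis card_2_iff doubleton_eq_iff insert_iff singletonD)
  then have "fst r' \<noteq> fst (\<omega> p)"
    using K'(1) unfolding distinct_abs_def by (metis inj_onD insertCI)
  then show ?thesis using that K'(3) r'(1) by blast
qed

lemma tau_image_ridge_inj:
  assumes "fst r1 \<noteq> fst p" "fst r2 \<noteq> fst p"
    and "\<tau> p ` faceF {r1, p} = \<tau> p ` faceF {r2, p}"
  shows "r1 = r2"
proof -
  have "faceF {r1, p} \<subseteq> facet p" "faceF {r2, p} \<subseteq> facet p"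
    by (auto simp: faceF_def)
  then have "faceF {r1, p} = faceF {r2, p}"
    using tau_inverse assms(3) by metis
  moreover have "distinct_abs {r1, p}" "distinct_abs {r2, p}"
    using assms(1,2) by (auto simp: distinct_abs_def)
  ultimately have "{r1, p} = {r2, p}"
    using faceF_inj by blast
  then show ?thesis
    using assms(1,2) by (metis doubleton_eq_iff)
qed

lemma apply_comp_faceF:
  assumes "valid_comp \<tau> ks (faceF K)" "distinct_abs K" "K \<noteq> {}"
  shows "\<exists>K'. distinct_abs K' \<and> K' \<noteq> {} \<and> apply_comp \<tau> ks (faceF K) = faceF K' \<and> card K' = card K"
  using assms
proof (induction ks arbitrary: K)
  case (Cons k ks)
  then have sub: "faceF K \<subseteq> facet k" and valid: "valid_comp \<tau> ks (\<tau> k ` faceF K)" by auto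
  obtain K1 where "distinct_abs K1" "K1 \<noteq> {}" "\<tau> k ` faceF K = faceF K1" "card K1 = card K"
    using tau_image_faceF[OF Cons.prems(2,3) sub] .
  then show ?case using Cons.IH[of K1] valid by auto
qed auto

context
  fixes J :: "'n sidx set"
  assumes J: "J \<noteq> {}" "distinct_abs J"
begin

abbreviation family :: "(real ^ 'n) set set" where
  "family \<equiv> face_family \<tau> (faceF J)"

abbreviation level :: "(real ^ 'n) set \<Rightarrow> nat" where
  "level h \<equiv> comp_level \<tau> (faceF J) h"

definition descents :: "(real ^ 'n) set \<Rightarrow> 'n sidx set" where
  "descents h = {k \<in> containing_facets h. level (\<tau> k ` h) < level h}"

definition ascents :: "(real ^ 'n) set \<Rightarrow> 'n sidx set" where
  "ascents h = {k \<in> containing_facets h. level h < level (\<tau> k ` h)}"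

lemma family_iff:
  "h \<in> family \<longleftrightarrow> (\<exists>ks. valid_comp \<tau> ks (faceF J) \<and> apply_comp \<tau> ks (faceF J) = h)"
  by (auto simp: face_family_def)

lemma family_faceF:
  assumes "h \<in> family"
  obtains K where "distinct_abs K" "h = faceF K" "card K = card J"
  using assms apply_comp_faceF[OF _ J(2,1)] by (auto simp: family_iff)

lemma card_containing_facets: "h \<in> family \<Longrightarrow> card (containing_facets h) = card J"
  by (metis family_faceF containing_facets_faceF)

lemma family_finite: "finite family"
proof -
  have "family \<subseteq> range faceF" using family_faceF by (metis rangeI subsetI)
  then show ?thesis by (rule finite_subset) simp
qed

lemma level_witness:
  assumes "h \<in> family"
  obtains ks where "length ks = level h" "valid_comp \<tau> ks (faceF J)" "apply_comp \<tau> ks (faceF J) = h"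
proof -
  have "\<exists>m ks. length ks = m \<and> valid_comp \<tau> ks (faceF J) \<and> apply_comp \<tau> ks (faceF J) = h"
    using assms family_iff by blast
  then have "\<exists>ks. length ks = level h \<and> valid_comp \<tau> ks (faceF J) \<and> apply_comp \<tau> ks (faceF J) = h"
    unfolding comp_level_def by (rule LeastI_ex)
  then show ?thesis using that by blast
qed

lemma level_le: "valid_comp \<tau> ks (faceF J) \<Longrightarrow> level (apply_comp \<tau> ks (faceF J)) \<le> length ks"
  unfolding comp_level_def by (rule Least_le) blast

lemma move_in_family:
  assumes "h \<in> family" "k \<in> containing_facets h"
  shows "\<tau> k ` h \<in> family" "level (\<tau> k ` h) \<le> Suc (level h)"
proof -
  obtain ks where ks: "length ks = level h" "valid_comp \<tau> ks (faceF J)" "apply_comp \<tau> ks (faceF J) = h"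
    using level_witness[OF assms(1)] .
  have valid: "valid_comp \<tau> (ks @ [k]) (faceF J)"
    using ks assms(2) by (simp add: valid_comp_snoc containing_facets_def)
  moreover have "apply_comp \<tau> (ks @ [k]) (faceF J) = \<tau> k ` h"
    using ks by (simp add: apply_comp_snoc)
  ultimately show "\<tau> k ` h \<in> family" "level (\<tau> k ` h) \<le> Suc (level h)"
    using family_iff level_le[OF valid] ks(1) by auto
qed

lemma move_back:
  assumes "k \<in> containing_facets h"
  shows "\<omega> k \<in> containing_facets (\<tau> k ` h)" "\<tau> (\<omega> k) ` \<tau> k ` h = h"
  using tau_maps_into tau_inverse assms by (auto simp: containing_facets_def)

lemma level_move_back:
  assumes "h \<in> family" "k \<in> containing_facets h"
  shows "level h \<le> Suc (level (\<tau> k ` h))"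
  using move_in_family(2)[OF move_in_family(1)[OF assms] move_back(1)[OF assms(2)]]
  by (simp add: move_back(2)[OF assms(2)])

lemma level_predecessor:
  assumes "h \<in> family" "level h = Suc n"
  obtains h1 p where "h1 \<in> family" "level h1 = n" "p \<in> containing_facets h1" "h = \<tau> p ` h1"
proof -
  obtain ks where ks: "length ks = Suc n" "valid_comp \<tau> ks (faceF J)" "apply_comp \<tau> ks (faceF J) = h"
    using level_witness[OF assms(1)] assms(2) by metis
  then obtain ks1 p where ks1: "ks = ks1 @ [p]" by (cases ks rule: rev_exhaust) auto
  define h1 where "h1 = apply_comp \<tau> ks1 (faceF J)"
  have valid1: "valid_comp \<tau> ks1 (faceF J)" and p: "p \<in> containing_facets h1"
    using ks(2) ks1 by (auto simp: valid_comp_snoc h1_def containing_facets_def)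
  have h: "h = \<tau> p ` h1" using ks(3) ks1 by (simp add: apply_comp_snoc h1_def)
  have h1: "h1 \<in> family" using valid1 family_iff h1_def by blast
  have "level h1 \<le> n" using level_le[OF valid1] ks(1) ks1 h1_def by simp
  moreover have "level h \<le> Suc (level h1)" using move_in_family(2)[OF h1 p] h by simp
  ultimately have "level h1 = n" using assms(2) by simp
  then show ?thesis using that h1 p h by blast
qed

lemma descent_ridge:
  assumes "h1 \<in> family" "p \<in> containing_facets h1" "level h1 < level (\<tau> p ` h1)"
    and "r \<in> descents h1"
  shows "fst r \<noteq> fst p" "h1 \<subseteq> faceF {r, p}"
proof -
  obtain K where K: "distinct_abs K" "h1 = faceF K"
    using family_faceF[OF assms(1)] by metis
  have r: "r \<in> containing_facets h1" "level (\<tau> r ` h1) < level h1"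
    using assms(4) by (auto simp: descents_def)
  then have "r \<noteq> p" using assms(3) by auto
  moreover have "r \<in> K" "p \<in> K"
    using r(1) assms(2) K containing_facets_faceF by auto
  ultimately show "fst r \<noteq> fst p"
    using K(1) unfolding distinct_abs_def by (metis inj_onD)
  show "h1 \<subseteq> faceF {r, p}"
    using r(1) assms(2) K(2) by (auto simp: faceF_def containing_facets_def)
qed

text \<open>Heart of the argument: the cocycle condition transports each descent r of h1 along the
  upward move p to a descent of \<tau> p h1, namely the second facet of the ridge
  \<tau> p (F(r, p)) = F(r', \<omega> p).\<close>
lemma descent_transport:
  assumes h1: "h1 \<in> family" and p: "p \<in> containing_facets h1"
    and up: "level (\<tau> p ` h1) = Suc (level h1)" and r: "r \<in> descents h1"
  obtains r' where "r' \<in> descents (\<tau> p ` h1)" "fst r' \<noteq> fst (\<omega> p)"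
    "\<tau> p ` faceF {r, p} = faceF {r', \<omega> p}"
proof -
  have rp: "fst r \<noteq> fst p" "h1 \<subseteq> faceF {r, p}"
    using descent_ridge[OF h1 p _ r] up by auto
  obtain r' where r': "fst r' \<noteq> fst (\<omega> p)" "\<tau> p ` faceF {r, p} = faceF {r', \<omega> p}"
    using tau_image_ridge[OF rp(1)] .
  obtain k' where k': "fst k' \<noteq> fst (\<omega> r)" "\<tau> r ` faceF {p, r} = faceF {k', \<omega> r}"
    using tau_image_ridge[of p r] rp(1) by metis
  have "\<tau> r' (\<tau> p x) = \<tau> k' (\<tau> r x)" if "x \<in> h1" for x
    using pairing_cocycle[OF _ k'(1) r'(1), of x] k'(2) r'(2) rp that
    by (auto simp: insert_commute)
  then have commute: "\<tau> r' ` \<tau> p ` h1 = \<tau> k' ` \<tau> r ` h1"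
    by (force simp: image_image)
  have r_down: "r \<in> containing_facets h1" "level (\<tau> r ` h1) < level h1"
    using r by (auto simp: descents_def)
  have "\<tau> r ` h1 \<subseteq> faceF {k', \<omega> r}"
    using rp(2) k'(2) by (metis image_mono insert_commute)
  then have "k' \<in> containing_facets (\<tau> r ` h1)"
    by (auto simp: containing_facets_def faceF_def)
  then have "level (\<tau> r' ` \<tau> p ` h1) \<le> Suc (level (\<tau> r ` h1))"
    using commute move_in_family(2)[OF move_in_family(1)[OF h1 r_down(1)]] by simp
  moreover have "\<tau> p ` h1 \<subseteq> faceF {r', \<omega> p}"
    using rp(2) r'(2) by (metis image_mono)
  then have "r' \<in> containing_facets (\<tau> p ` h1)"
    by (auto simp: containing_facets_def faceF_def)
  ultimately have "r' \<in> descents (\<tau> p ` h1)"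
    using r_down(2) up by (simp add: descents_def)
  then show ?thesis using that r' by blast
qed

lemma level_le_card_descents: "h \<in> family \<Longrightarrow> level h \<le> card (descents h)"
proof (induction "level h" arbitrary: h)
  case (Suc n)
  obtain h1 p where h1: "h1 \<in> family" "level h1 = n" "p \<in> containing_facets h1" "h = \<tau> p ` h1"
    using level_predecessor[OF Suc.prems Suc.hyps(2)[symmetric]] .
  have up: "level (\<tau> p ` h1) = Suc (level h1)" using h1 Suc.hyps(2) by simp
  have "\<forall>r\<in>descents h1. \<exists>r'.
      r' \<in> descents h \<and> fst r' \<noteq> fst (\<omega> p) \<and> \<tau> p ` faceF {r, p} = faceF {r', \<omega> p}"
    using descent_transport[OF h1(1,3) up] h1(4) by blast
  then obtain g where g: "\<And>r. r \<in> descents h1 \<Longrightarrow>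
      g r \<in> descents h \<and> fst (g r) \<noteq> fst (\<omega> p) \<and> \<tau> p ` faceF {r, p} = faceF {g r, \<omega> p}"
    by (metis bchoice)
  have "inj_on g (descents h1)"
  proof (rule inj_onI)
    fix r1 r2 assume r1: "r1 \<in> descents h1" and r2: "r2 \<in> descents h1" and eq: "g r1 = g r2"
    have "fst r1 \<noteq> fst p" "fst r2 \<noteq> fst p"
      using descent_ridge(1)[OF h1(1,3) _ r1] descent_ridge(1)[OF h1(1,3) _ r2] up by simp_all
    moreover have "\<tau> p ` faceF {r1, p} = \<tau> p ` faceF {r2, p}"
      using g[OF r1] g[OF r2] eq by simp
    ultimately show "r1 = r2" by (rule tau_image_ridge_inj)
  qed
  moreover have "\<omega> p \<in> descents h"
    using move_back[OF h1(3)] h1 up by (simp add: descents_def)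
  moreover have "\<omega> p \<notin> g ` descents h1" using g by force
  ultimately have "card (insert (\<omega> p) (g ` descents h1)) = Suc (card (descents h1))"
    by (simp add: card_image)
  moreover have "insert (\<omega> p) (g ` descents h1) \<subseteq> descents h"
    using g \<open>\<omega> p \<in> descents h\<close> by blast
  then have "card (insert (\<omega> p) (g ` descents h1)) \<le> card (descents h)"
    by (rule card_mono[rotated]) simp
  moreover have "n \<le> card (descents h1)"
    using Suc.hyps(1)[of h1] h1(1,2) by simp
  ultimately show ?case
    using Suc.hyps(2) by simp
qed simp

abbreviation level_set :: "nat \<Rightarrow> (real ^ 'n) set set" where
  "level_set d \<equiv> {h \<in> family. level h = d}"

text \<open>Since a member of level d has card J facets, of which at least d are descents, it has
  at most card J - d ascents.\<close>
lemma card_ascents: "h \<in> family \<Longrightarrow> card (ascents h) \<le> card J - level h"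
proof -
  assume h: "h \<in> family"
  have "ascents h \<subseteq> containing_facets h - descents h"
    by (auto simp: ascents_def descents_def)
  then have "card (ascents h) \<le> card (containing_facets h - descents h)"
    by (rule card_mono[rotated]) simp
  also have "\<dots> = card (containing_facets h) - card (descents h)"
    by (rule card_Diff_subset) (auto simp: descents_def)
  finally show ?thesis
    using card_containing_facets[OF h] level_le_card_descents[OF h] by linarith
qed

lemma descent_reversal:
  assumes h: "h \<in> family" and k: "k \<in> descents h"
  shows "\<tau> k ` h \<in> family" "Suc (level (\<tau> k ` h)) = level h" "\<omega> k \<in> ascents (\<tau> k ` h)"
proof -
  have k_facet: "k \<in> containing_facets h" and down: "level (\<tau> k ` h) < level h"
    using k by (auto simp: descents_def)
  show "\<tau> k ` h \<in> family" using move_in_family(1)[OF h k_facet] .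
  show level: "Suc (level (\<tau> k ` h)) = level h"
    using level_move_back[OF h k_facet] down by simp
  show "\<omega> k \<in> ascents (\<tau> k ` h)"
    using move_back[OF k_facet] level by (simp add: ascents_def)
qed

text \<open>Double counting of the moves between consecutive levels: a member of level d+1 has at
  least d+1 descents, a member of level d at most card J - d ascents, and reversing
  descents maps the former injectively into the latter.\<close>
lemma level_set_recurrence:
  "Suc d * card (level_set (Suc d)) \<le> (card J - d) * card (level_set d)"
proof -
  define Down where "Down = Sigma (level_set (Suc d)) descents"
  define Up where "Up = Sigma (level_set d) ascents"
  have "(\<Sum>h\<in>level_set (Suc d). Suc d) \<le> (\<Sum>h\<in>level_set (Suc d). card (descents h))"
    using level_le_card_descents by (intro sum_mono) fastforce
  also have "\<dots> = card Down"
    unfolding Down_def using family_finite by (intro card_SigmaI[symmetric]) auto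
  finally have down_count: "Suc d * card (level_set (Suc d)) \<le> card Down"
    by (simp add: mult.commute)
  have "card Up = (\<Sum>h\<in>level_set d. card (ascents h))"
    unfolding Up_def using family_finite by (intro card_SigmaI) auto
  also have "\<dots> \<le> (\<Sum>h\<in>level_set d. card J - d)"
    using card_ascents by (intro sum_mono) fastforce
  finally have up_count: "card Up \<le> (card J - d) * card (level_set d)"
    by (simp add: mult.commute)
  have "card Down \<le> card Up"
  proof (rule card_inj_on_le)
    show "inj_on (\<lambda>(h, k). (\<tau> k ` h, \<omega> k)) Down"
    proof (rule inj_onI, clarify)
      fix h1 k1 h2 k2
      assume "(h1, k1) \<in> Down" "(h2, k2) \<in> Down" "\<tau> k1 ` h1 = \<tau> k2 ` h2" "\<omega> k1 = \<omega> k2"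
      moreover from this have "h1 \<subseteq> facet k1" "h2 \<subseteq> facet k2"
        by (auto simp: Down_def descents_def containing_facets_def)
      ultimately show "h1 = h2 \<and> k1 = k2"
        using tau_inverse pairing_involution by metis
    qed
    show "(\<lambda>(h, k). (\<tau> k ` h, \<omega> k)) ` Down \<subseteq> Up"
      using descent_reversal by (fastforce simp: Down_def Up_def)
    show "finite Up" unfolding Up_def using family_finite by auto
  qed
  then show ?thesis using down_count up_count by linarith
qed

lemma family_card: "card family \<le> 2 ^ card J"
proof -
  have "level_set 0 \<subseteq> {faceF J}"
  proof
    fix h assume "h \<in> level_set 0"
    then obtain ks where "length ks = 0" "apply_comp \<tau> ks (faceF J) = h"
      using level_witness by (metis (mono_tags, lifting) mem_Collect_eq)
    then show "h \<in> {faceF J}" by simp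
  qed
  then have "card (level_set 0) \<le> card {faceF J}"
    by (rule card_mono[rotated]) simp
  then have "card (level_set 0) \<le> 1" by simp
  from card_bound_by_rank_recurrence[where rank = level, OF family_finite this level_set_recurrence]
  show ?thesis .
qed

end

end

theorem mainTheorem3:
  fixes \<omega> :: "'n::finite sidx \<Rightarrow> 'n sidx"
    and \<tau> :: "'n sidx \<Rightarrow> real ^ 'n \<Rightarrow> real ^ 'n"
    and J :: "'n sidx set"
  assumes "regular_facets_pairing \<omega> \<tau>"
    and "J \<noteq> {}" and "distinct_abs J"
  shows "finite (face_family \<tau> (faceF J))
      \<and> card (face_family \<tau> (faceF J)) \<le> 2 ^ card J
      \<and> (card (face_family \<tau> (faceF J)) = 2 ^ card J \<longleftrightarrow> perfect_family \<tau> J)"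
proof -
  interpret regular_pairing \<omega> \<tau>
    by unfold_locales (rule assms(1))
  show ?thesis
    using family_finite[OF assms(2,3)] family_card[OF assms(2,3)]
    by (simp add: perfect_family_def)
qed

end
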